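(* Let $V\in\mathbb R^{n\times n}$ be orthogonal with $\|V-I\|_2<r<1$. Then \[\|\log_m(V)\|_2<r\,\frac{\sqrt{1-r^2/4}}{1-r^2/2}.\]
   Context: $\|\cdot\|_2$ is the spectral norm and $\log_m$ the principal matrix logarithm. *)

theory Defs
  imports "HOL-Analysis.Analysis"
begin

definition spec_norm :: "real^'n^'n \<Rightarrow> real" where
  "spec_norm A = onorm (\<lambda>x. A *v x)"

primrec mat_pow :: "real^'n^'n \<Rightarrow> nat \<Rightarrow> real^'n^'n" where
  "mat_pow A 0 = mat 1"
| "mat_pow A (Suc k) = A ** mat_pow A k"

definition mat_exp :: "real^'n^'n \<Rightarrow> real^'n^'n" where
  "mat_exp A = (\<Sum>k. (1 / fact k) *\<^sub>R mat_pow A k)"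

definition cplx_eigenvalue :: "real^'n^'n \<Rightarrow> complex \<Rightarrow> bool" where
  "cplx_eigenvalue A l \<longleftrightarrow>
     (\<exists>v::complex^'n. v \<noteq> 0 \<and> map_matrix complex_of_real A *v v = l *s v)"

definition principal_log :: "real^'n^'n \<Rightarrow> real^'n^'n" where
  "principal_log V = (THE X. mat_exp X = V \<and>
      (\<forall>l. cplx_eigenvalue X l \<longrightarrow> - pi < Im l \<and> Im l < pi))"

end

theory Submission
  imports Defs "HOL-Computational_Algebra.Fundamental_Theorem_Algebra"
begin

text \<open>Being orthogonal, \<open>V\<close> has an orthonormal eigenbasis of \<open>\<complex>\<^sup>n\<close>; its eigenvalues \<open>\<mu>\<close> lie on the
  unit circle with \<open>\<bar>\<mu> - 1\<bar> \<le> s = \<parallel>V - I\<parallel> < 1\<close>, hence \<open>\<mu> = e\<^sup>i\<^sup>t\<close> with \<open>\<bar>t\<bar> \<le> 2 arcsin (s/2) < \<pi>/2\<close>.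
  Replacing each \<open>\<mu>\<close> by \<open>Ln \<mu>\<close> in this basis gives a real matrix \<open>L\<close> with \<open>exp L = V\<close>; it is the
  principal logarithm since every logarithm of \<open>V\<close> commutes with \<open>L\<close>, and \<open>exp\<close> is injective on
  commuting matrices with spectrum in the strip \<open>\<bar>Im z\<bar> < \<pi>\<close>. As \<open>L\<close> is normal, its norm is its
  largest \<open>\<bar>t\<bar>\<close>, and \<open>2 arcsin (s/2) < 2 arcsin (r/2) \<le> tan (2 arcsin (r/2))\<close>, which is the bound.\<close>

section \<open>Square matrices as a Banach algebra\<close>

lemma matrix_add_rdistrib: "(B + C) ** A = B ** A + C ** A"
  by (simp add: matrix_matrix_mult_def vec_eq_iff sum.distrib algebra_simps)

lemma spec_norm_nonneg: "0 \<le> spec_norm A"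
  unfolding spec_norm_def by (rule onorm_pos_le) simp

lemma spec_norm_bound: "norm (A *v x) \<le> spec_norm A * norm x"
  unfolding spec_norm_def by (rule onorm) simp

lemma spec_norm_eq_0_iff: "spec_norm A = 0 \<longleftrightarrow> A = 0"
  unfolding spec_norm_def
  by (simp add: onorm_eq_0) (metis matrix_eq matrix_vector_mult_0)

lemma spec_norm_triangle: "spec_norm (A + B) \<le> spec_norm A + spec_norm B"
proof -
  have "(*v) (A + B) = (\<lambda>x. A *v x + B *v x)"
    by (simp add: matrix_vector_mult_add_rdistrib fun_eq_iff)
  then show ?thesis unfolding spec_norm_def by (simp add: onorm_triangle)
qed

lemma spec_norm_scaleR: "spec_norm (c *\<^sub>R A) = \<bar>c\<bar> * spec_norm A"
proof -
  have "(*v) (c *\<^sub>R A) = (\<lambda>x. c *\<^sub>R (A *v x))"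
    by (simp add: scaleR_matrix_vector_assoc fun_eq_iff)
  then show ?thesis unfolding spec_norm_def by (simp add: onorm_scaleR)
qed

lemma spec_norm_mult: "spec_norm (A ** B) \<le> spec_norm A * spec_norm B"
proof -
  have "(*v) (A ** B) = (*v) A \<circ> (*v) B"
    by (simp add: matrix_vector_mul_assoc fun_eq_iff)
  then show ?thesis unfolding spec_norm_def by (simp add: onorm_compose)
qed

lemma spec_norm_mat_1: "spec_norm (mat 1 :: real^'n^'n) = 1"
proof -
  have "(*v) (mat 1 :: real^'n^'n) = (\<lambda>x. x)" by (simp add: fun_eq_iff)
  then show ?thesis unfolding spec_norm_def by (simp add: onorm_id)
qed

lemma norm_le_sum_abs_entries: "norm (A :: real^'n^'m) \<le> (\<Sum>i\<in>UNIV. \<Sum>j\<in>UNIV. \<bar>A $ i $ j\<bar>)"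
proof -
  have "norm A \<le> (\<Sum>i\<in>UNIV. norm (A $ i))" by (simp add: norm_vec_def L2_set_le_sum)
  also have "\<dots> \<le> (\<Sum>i\<in>UNIV. \<Sum>j\<in>UNIV. \<bar>A $ i $ j\<bar>)" by (intro sum_mono norm_le_l1_cart)
  finally show ?thesis .
qed

lemma norm_le_spec_norm: "norm A \<le> real CARD('n) * real CARD('n) * spec_norm (A :: real^'n^'n)"
proof -
  have "norm A \<le> (\<Sum>i\<in>UNIV. \<Sum>j\<in>UNIV. \<bar>A $ i $ j\<bar>)" by (rule norm_le_sum_abs_entries)
  also have "\<dots> \<le> (\<Sum>i\<in>(UNIV::'n set). \<Sum>j\<in>(UNIV::'n set). spec_norm A)"
    unfolding spec_norm_def by (intro sum_mono matrix_component_le_onorm)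
  finally show ?thesis by simp
qed

lemma spec_norm_le_norm: "spec_norm A \<le> real CARD('n) * real CARD('n) * norm (A :: real^'n^'n)"
proof -
  have "spec_norm A \<le> (\<Sum>i\<in>UNIV. \<Sum>j\<in>UNIV. \<bar>A $ i $ j\<bar>)"
    unfolding spec_norm_def by (rule onorm_le_matrix_component_sum)
  also have "\<dots> \<le> (\<Sum>i\<in>(UNIV::'n set). \<Sum>j\<in>(UNIV::'n set). norm A)"
  proof (intro sum_mono)
    fix i j show "\<bar>A $ i $ j\<bar> \<le> norm A"
      using component_le_norm_cart[of "A $ i" j] Finite_Cartesian_Product.norm_nth_le[of A i] by linarith
  qed
  finally show ?thesis by simp
qed

text \<open>A copy of the square matrices with matrix multiplication as product and the spectral norm as
  norm: it is a Banach algebra, so the generic exponential \<open>exp\<close> and its laws apply to matrices.\<close>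

typedef (overloaded) 'n sqmat = "UNIV :: (real^'n^'n) set"
  morphisms mat_of Sqmat by auto

setup_lifting type_definition_sqmat

instantiation sqmat :: (finite) real_normed_algebra_1
begin

lift_definition zero_sqmat :: "'a sqmat" is "0" .
lift_definition one_sqmat :: "'a sqmat" is "mat 1" .
lift_definition plus_sqmat :: "'a sqmat \<Rightarrow> 'a sqmat \<Rightarrow> 'a sqmat" is "(+)" .
lift_definition minus_sqmat :: "'a sqmat \<Rightarrow> 'a sqmat \<Rightarrow> 'a sqmat" is "(-)" .
lift_definition uminus_sqmat :: "'a sqmat \<Rightarrow> 'a sqmat" is "uminus" .
lift_definition times_sqmat :: "'a sqmat \<Rightarrow> 'a sqmat \<Rightarrow> 'a sqmat" is "(**)" .
lift_definition scaleR_sqmat :: "real \<Rightarrow> 'a sqmat \<Rightarrow> 'a sqmat" is "scaleR" .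
lift_definition norm_sqmat :: "'a sqmat \<Rightarrow> real" is "spec_norm" .

definition dist_sqmat :: "'a sqmat \<Rightarrow> 'a sqmat \<Rightarrow> real"
  where "dist_sqmat a b = norm (a - b)"

definition uniformity_sqmat :: "('a sqmat \<times> 'a sqmat) filter"
  where "uniformity_sqmat = (INF e\<in>{0 <..}. principal {(x, y). dist x y < e})"

definition open_sqmat :: "'a sqmat set \<Rightarrow> bool"
  where "open_sqmat S = (\<forall>x\<in>S. \<forall>\<^sub>F (x', y) in uniformity. x' = x \<longrightarrow> y \<in> S)"

definition sgn_sqmat :: "'a sqmat \<Rightarrow> 'a sqmat"
  where "sgn_sqmat x = inverse (norm x) *\<^sub>R x"

instance
proof
  fix a b c :: "'a sqmat" and r s :: real and U :: "'a sqmat set"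
  show "a + b + c = a + (b + c)" "a + b = b + a" "0 + a = a" "- a + a = 0" "a - b = a + - b"
    by (transfer; simp add: algebra_simps)+
  show "r *\<^sub>R (a + b) = r *\<^sub>R a + r *\<^sub>R b" "(r + s) *\<^sub>R a = r *\<^sub>R a + s *\<^sub>R a"
    "r *\<^sub>R s *\<^sub>R a = (r * s) *\<^sub>R a" "1 *\<^sub>R a = a"
    by (transfer; simp add: algebra_simps)+
  show "a * b * c = a * (b * c)" by transfer (simp add: matrix_mul_assoc)
  show "(a + b) * c = a * c + b * c" by transfer (rule matrix_add_rdistrib)
  show "a * (b + c) = a * b + a * c" by transfer (rule matrix_add_ldistrib)
  show "r *\<^sub>R a * b = r *\<^sub>R (a * b)" by transfer (simp add: scalar_matrix_assoc)
  show "a * r *\<^sub>R b = r *\<^sub>R (a * b)" by transfer (simp add: matrix_scalar_ac scalar_matrix_assoc)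
  show "1 * a = a" "a * 1 = a" by (transfer; simp)+
  show "(0::'a sqmat) \<noteq> 1" by transfer (auto simp: vec_eq_iff mat_def)
  show "dist a b = norm (a - b)" by (rule dist_sqmat_def)
  show "sgn a = inverse (norm a) *\<^sub>R a" by (rule sgn_sqmat_def)
  show "uniformity = (INF e\<in>{0 <..}. principal {(x, y). dist x y < (e::real)} :: ('a sqmat \<times> _) filter)"
    by (rule uniformity_sqmat_def)
  show "open U = (\<forall>x\<in>U. \<forall>\<^sub>F (x', y) in uniformity. x' = x \<longrightarrow> y \<in> U)"
    by (rule open_sqmat_def)
  show "norm a = 0 \<longleftrightarrow> a = 0" by transfer (rule spec_norm_eq_0_iff)
  show "norm (a + b) \<le> norm a + norm b" by transfer (rule spec_norm_triangle)
  show "norm (r *\<^sub>R a) = \<bar>r\<bar> * norm a" by transfer (rule spec_norm_scaleR)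
  show "norm (a * b) \<le> norm a * norm b" by transfer (rule spec_norm_mult)
  show "norm (1::'a sqmat) = 1" by transfer (rule spec_norm_mat_1)
qed

end

lemma mat_of_zero: "mat_of 0 = 0" by transfer simp
lemma mat_of_one: "mat_of 1 = mat 1" by transfer simp
lemma mat_of_add: "mat_of (a + b) = mat_of a + mat_of b" by transfer simp
lemma mat_of_diff: "mat_of (a - b) = mat_of a - mat_of b" by transfer simp
lemma mat_of_uminus: "mat_of (- a) = - mat_of a" by transfer simp
lemma mat_of_mult: "mat_of (a * b) = mat_of a ** mat_of b" by transfer simp
lemma mat_of_scaleR: "mat_of (r *\<^sub>R a) = r *\<^sub>R mat_of a" by transfer simp
lemma mat_of_power: "mat_of (a ^ k) = mat_pow (mat_of a) k"
  by (induct k) (simp_all add: mat_of_one mat_of_mult)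

lemmas mat_of_simps = mat_of_zero mat_of_one mat_of_add mat_of_diff mat_of_uminus mat_of_mult
  mat_of_scaleR mat_of_power Sqmat_inverse[OF UNIV_I]

lemma Sqmat_add: "Sqmat (A + B) = Sqmat A + Sqmat B"
  and Sqmat_uminus: "Sqmat (- A) = - Sqmat A"
  and Sqmat_scaleR: "Sqmat (c *\<^sub>R A) = c *\<^sub>R Sqmat A"
  and Sqmat_mult: "Sqmat (A ** B) = Sqmat A * Sqmat B"
  by (rule mat_of_inject[THEN iffD1], simp add: mat_of_simps)+

lemma norm_Sqmat: "norm (Sqmat A) = spec_norm A"
  by (simp add: norm_sqmat.rep_eq Sqmat_inverse)

lemma bounded_linear_mat_of: "bounded_linear (mat_of :: 'n::finite sqmat \<Rightarrow> _)"
proof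
  show "\<exists>K. \<forall>a::'n sqmat. norm (mat_of a) \<le> norm a * K"
    using norm_le_spec_norm[where 'n='n]
    by (auto simp: norm_sqmat.rep_eq mult_ac intro!: exI[of _ "real CARD('n) * real CARD('n)"])
qed (simp_all add: mat_of_simps)

lemma bounded_linear_Sqmat: "bounded_linear (Sqmat :: real^'n^'n \<Rightarrow> 'n::finite sqmat)"
proof
  show "\<exists>K. \<forall>A::real^'n^'n. norm (Sqmat A) \<le> norm A * K"
    using spec_norm_le_norm[where 'n='n]
    by (auto simp: norm_Sqmat mult_ac intro!: exI[of _ "real CARD('n) * real CARD('n)"])
qed (simp_all add: Sqmat_add Sqmat_scaleR)

instance sqmat :: (finite) banach
proof
  fix X :: "nat \<Rightarrow> 'a sqmat"
  assume "Cauchy X"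
  then have "Cauchy (\<lambda>k. mat_of (X k))" by (rule bounded_linear.Cauchy[OF bounded_linear_mat_of])
  then obtain A where "(\<lambda>k. mat_of (X k)) \<longlonglongrightarrow> A" by (auto simp: Cauchy_convergent_iff convergent_def)
  then have "(\<lambda>k. Sqmat (mat_of (X k))) \<longlonglongrightarrow> Sqmat A"
    by (rule bounded_linear.tendsto[OF bounded_linear_Sqmat])
  then show "convergent X" by (auto simp: convergent_def mat_of_inverse)
qed

section \<open>The exponential and the relative exponential in a Banach algebra\<close>

lemma suminf_commute:
  fixes a :: "'a::{real_normed_algebra_1, banach}"
  assumes "summable f" "\<And>n. a * f n = f n * a"
  shows "a * suminf f = suminf f * a"
  using suminf_mult[OF assms(1), of a] suminf_mult2[OF assms(1), of a] assms(2) by simp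

lemma exp_commute:
  fixes a x :: "'a::{real_normed_algebra_1, banach}"
  assumes "a * x = x * a"
  shows "a * exp x = exp x * a"
  unfolding exp_def
  by (rule suminf_commute[OF summable_exp_generic])
     (simp add: power_commuting_commutes[OF assms[symmetric]])

text \<open>The relative exponential \<open>(exp x - 1) / x\<close>, named after the GSL function.\<close>

definition exprel :: "'a::{real_normed_algebra_1, banach} \<Rightarrow> 'a" where
  "exprel x = (\<Sum>n. (1 / fact (Suc n)) *\<^sub>R x ^ n)"

lemma summable_exprel:
  fixes x :: "'a::{real_normed_algebra_1, banach}"
  shows "summable (\<lambda>n. (1 / fact (Suc n)) *\<^sub>R x ^ n)"
proof (rule summable_comparison_test')
  show "summable (\<lambda>n. norm x ^ n /\<^sub>R fact n)" using summable_exp_generic[of "norm x"] by simp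
  fix n :: nat
  have "norm ((1 / fact (Suc n)) *\<^sub>R x ^ n) = (1 / fact (Suc n)) * norm (x ^ n)" by simp
  also have "\<dots> \<le> (1 / fact n) * norm x ^ n"
    by (intro mult_mono norm_power_ineq) (simp_all add: divide_simps fact_mono)
  finally have "norm ((1 / fact (Suc n)) *\<^sub>R x ^ n) \<le> (1 / fact n) * norm x ^ n" .
  then show "norm ((1 / fact (Suc n)) *\<^sub>R x ^ n) \<le> norm x ^ n /\<^sub>R fact n"
    by (simp add: divide_inverse_commute)
qed

lemma exprel_0: "exprel 0 = 1"
  unfolding exprel_def using powser_zero[of "\<lambda>n. of_real (1 / fact (Suc n))"]
  by (simp add: scaleR_conv_of_real)

lemma mult_exprel: "x * exprel x = exp x - 1"
proof -
  have "x * exprel x = (\<Sum>n. x * ((1 / fact (Suc n)) *\<^sub>R x ^ n))"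
    unfolding exprel_def by (rule suminf_mult[OF summable_exprel, symmetric])
  also have "\<dots> = (\<Sum>n. inverse (fact (Suc n)) *\<^sub>R x ^ Suc n)" by (simp add: inverse_eq_divide)
  also have "\<dots> = exp x - 1" using exp_first_term[of x] by simp
  finally show ?thesis .
qed

lemma exprel_commute:
  assumes "a * x = x * a"
  shows "a * exprel x = exprel x * a"
  unfolding exprel_def
  by (rule suminf_commute[OF summable_exprel])
     (simp add: power_commuting_commutes[OF assms[symmetric]])

section \<open>Matrix exponential\<close>

lemma mat_of_sums:
  assumes "(\<lambda>n. c n *\<^sub>R x ^ n) sums s"
  shows "(\<lambda>n. c n *\<^sub>R mat_pow (mat_of x) n) sums mat_of (s :: 'n::finite sqmat)"
  using bounded_linear.sums[OF bounded_linear_mat_of assms] by (simp add: mat_of_simps)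

lemma mat_exp_sums: "(\<lambda>n. (1 / fact n) *\<^sub>R mat_pow X n) sums mat_of (exp (Sqmat X))"
proof -
  have "(\<lambda>n. (1 / fact n) *\<^sub>R Sqmat X ^ n) sums exp (Sqmat X)"
    using exp_converges[of "Sqmat X"] by (simp add: divide_inverse_commute)
  from mat_of_sums[OF this] show ?thesis by (simp add: mat_of_simps)
qed

lemma mat_exp_eq_exp: "mat_exp X = mat_of (exp (Sqmat X))"
  unfolding mat_exp_def by (rule sums_unique[OF mat_exp_sums, symmetric])

lemma mat_exp_add:
  assumes "A ** B = B ** A"
  shows "mat_exp (A + B) = mat_exp A ** mat_exp B"
proof -
  have "Sqmat A * Sqmat B = Sqmat B * Sqmat A" by (simp add: assms flip: Sqmat_mult)
  then show ?thesis by (simp add: mat_exp_eq_exp exp_add_commuting Sqmat_add mat_of_mult)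
qed

lemma mat_exp_uminus_mult: "mat_exp (- A) ** mat_exp A = mat 1"
proof -
  have "exp (Sqmat (- A)) * exp (Sqmat A) = 1"
    using exp_minus_inverse[of "- Sqmat A"] by (simp add: Sqmat_uminus)
  then show ?thesis by (simp add: mat_exp_eq_exp mat_of_one flip: mat_of_mult)
qed

lemma mat_exp_commute:
  assumes "A ** X = X ** A"
  shows "A ** mat_exp X = mat_exp X ** A"
proof -
  have "Sqmat A * Sqmat X = Sqmat X * Sqmat A" by (simp add: assms flip: Sqmat_mult)
  then have "mat_of (Sqmat A * exp (Sqmat X)) = mat_of (exp (Sqmat X) * Sqmat A)"
    by (rule arg_cong[OF exp_commute])
  then show ?thesis by (simp add: mat_exp_eq_exp mat_of_simps)
qed

definition mat_exprel :: "real^'n^'n \<Rightarrow> real^'n^'n" where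
  "mat_exprel X = mat_of (exprel (Sqmat X))"

lemma mat_exprel_sums: "(\<lambda>n. (1 / fact (Suc n)) *\<^sub>R mat_pow X n) sums mat_exprel X"
  unfolding mat_exprel_def exprel_def
  using mat_of_sums[OF summable_sums[OF summable_exprel], of "Sqmat X"] by (simp add: mat_of_simps)

lemma mult_mat_exprel: "X ** mat_exprel X = mat_exp X - mat 1"
proof -
  have "mat_of (Sqmat X * exprel (Sqmat X)) = mat_of (exp (Sqmat X) - 1)" by (simp add: mult_exprel)
  then show ?thesis unfolding mat_exprel_def mat_exp_eq_exp by (simp add: mat_of_simps)
qed

lemma mat_exprel_commute:
  assumes "A ** X = X ** A"
  shows "A ** mat_exprel X = mat_exprel X ** A"
proof -
  have "Sqmat A * Sqmat X = Sqmat X * Sqmat A" by (simp add: assms flip: Sqmat_mult)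
  then have "mat_of (Sqmat A * exprel (Sqmat X)) = mat_of (exprel (Sqmat X) * Sqmat A)"
    by (rule arg_cong[OF exprel_commute])
  then show ?thesis by (simp add: mat_exprel_def mat_of_simps)
qed

section \<open>Complexification and eigenvectors of matrix power series\<close>

abbreviation cmat :: "real^'n^'m \<Rightarrow> complex^'n^'m" where
  "cmat \<equiv> map_matrix complex_of_real"

lemma cmat_mult: "cmat (A ** B) = cmat A ** cmat B"
  by (simp add: vec_eq_iff matrix_matrix_mult_def)

lemma cmat_add: "cmat (A + B) = cmat A + cmat B"
  and cmat_diff: "cmat (A - B) = cmat A - cmat B"
  and cmat_zero: "cmat 0 = 0"
  and cmat_mat_1: "cmat (mat 1) = mat 1"
  by (simp_all add: vec_eq_iff mat_def)

lemma cmat_inject: "cmat A = cmat B \<longleftrightarrow> A = B"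
  by (simp add: vec_eq_iff)

lemma cmat_scaleR_mult_vec: "cmat (r *\<^sub>R A) *v u = of_real r *s (cmat A *v u)"
  by (simp add: vec_eq_iff matrix_vector_mult_def sum_distrib_left mult.assoc)

lemma cmat_mult_vec_assoc: "cmat A *v (cmat B *v u) = cmat (A ** B) *v u"
  by (simp add: matrix_vector_mul_assoc cmat_mult)

lemma mat_pow_eigen:
  assumes "cmat A *v u = \<mu> *s u"
  shows "cmat (mat_pow A n) *v u = \<mu> ^ n *s u"
proof (induct n)
  case (Suc n)
  then show ?case
    using assms by (simp flip: cmat_mult_vec_assoc add: vector_scalar_commute vector_smult_assoc)
qed (simp add: cmat_mat_1)

lemma sums_eigen:
  fixes M :: "nat \<Rightarrow> real^'n^'n"
  assumes S: "(\<lambda>n. c n *\<^sub>R M n) sums S"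
    and eigen: "\<And>n. cmat (M n) *v u = d n *s u"
    and z: "(\<lambda>n. of_real (c n) * d n) sums z"
  shows "cmat S *v u = z *s u"
proof -
  have "linear (\<lambda>M::real^'n^'n. cmat M *v u)"
  proof (rule linearI)
    fix A B :: "real^'n^'n" and r :: real
    show "cmat (A + B) *v u = cmat A *v u + cmat B *v u"
      by (simp add: cmat_add matrix_vector_mult_add_rdistrib)
    show "cmat (r *\<^sub>R A) *v u = r *\<^sub>R (cmat A *v u)"
      unfolding cmat_scaleR_mult_vec
      by (simp only: vec_eq_iff vector_scaleR_component vector_smult_component)
         (simp add: scaleR_conv_of_real)
  qed
  then have "(\<lambda>n. cmat (c n *\<^sub>R M n) *v u) sums (cmat S *v u)"
    using S bounded_linear.sums linear_conv_bounded_linear by blast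
  then have "(\<lambda>n. (of_real (c n) * d n) *s u) sums (cmat S *v u)"
    by (simp add: cmat_scaleR_mult_vec eigen vector_smult_assoc)
  moreover have "(\<lambda>n. (of_real (c n) * d n) *s u) sums (z *s u)"
  proof -
    have "linear (\<lambda>w::complex. w *s u)" by (rule linearI) (simp_all add: vec_eq_iff algebra_simps)
    then show ?thesis using z bounded_linear.sums linear_conv_bounded_linear by blast
  qed
  ultimately show ?thesis by (rule sums_unique2)
qed

lemma mat_exp_eigen:
  assumes "cmat X *v u = \<mu> *s u"
  shows "cmat (mat_exp X) *v u = exp \<mu> *s u"
proof (rule sums_eigen)
  show "(\<lambda>n. (1 / fact n) *\<^sub>R mat_pow X n) sums mat_exp X"
    by (simp add: mat_exp_sums mat_exp_eq_exp)
  show "(\<lambda>n. of_real (1 / fact n) * \<mu> ^ n) sums exp \<mu>"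
    using exp_converges[of \<mu>] by (simp add: scaleR_conv_of_real divide_inverse_commute)
qed (rule mat_pow_eigen[OF assms])

lemma mat_exprel_eigen:
  assumes "cmat X *v u = \<mu> *s u"
  shows "cmat (mat_exprel X) *v u = exprel \<mu> *s u"
proof (rule sums_eigen)
  show "(\<lambda>n. (1 / fact (Suc n)) *\<^sub>R mat_pow X n) sums mat_exprel X"
    by (rule mat_exprel_sums)
  show "(\<lambda>n. of_real (1 / fact (Suc n)) * \<mu> ^ n) sums exprel \<mu>"
    unfolding exprel_def using summable_sums[OF summable_exprel[of \<mu>]]
    by (simp add: scaleR_conv_of_real)
qed (rule mat_pow_eigen[OF assms])

section \<open>Eigenvectors in invariant subspaces\<close>

definition mat_poly_apply :: "complex^'n^'n \<Rightarrow> complex poly \<Rightarrow> complex^'n \<Rightarrow> complex^'n" where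
  "mat_poly_apply A p v = (\<Sum>k\<le>degree p. coeff p k *s ((*v) A ^^ k) v)"

lemma mat_poly_apply_bound:
  assumes "degree p < N"
  shows "mat_poly_apply A p v = (\<Sum>k<N. coeff p k *s ((*v) A ^^ k) v)"
  unfolding mat_poly_apply_def
proof (rule sum.mono_neutral_left)
  show "{..degree p} \<subseteq> {..<N}" using assms by auto
qed (auto simp: coeff_eq_0)

lemma mat_poly_apply_add: "mat_poly_apply A (p + q) v = mat_poly_apply A p v + mat_poly_apply A q v"
proof -
  define N where "N = Suc (degree p + degree q)"
  have "degree (p + q) < N" "degree p < N" "degree q < N"
    unfolding N_def using degree_add_le_max[of p q] by linarith+
  then show ?thesis by (simp add: mat_poly_apply_bound vector_sadd_rdistrib sum.distrib)
qed

lemma mat_poly_apply_smult: "mat_poly_apply A (smult c p) v = c *s mat_poly_apply A p v"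
  unfolding mat_poly_apply_def by (simp add: vec.scale_sum_right vector_smult_assoc)

lemma mat_poly_apply_monom: "mat_poly_apply A (monom c k) v = c *s ((*v) A ^^ k) v"
proof -
  have "mat_poly_apply A (monom c k) v = (\<Sum>j<Suc k. coeff (monom c k) j *s ((*v) A ^^ j) v)"
    by (rule mat_poly_apply_bound) (simp add: degree_monom_le le_imp_less_Suc)
  also have "\<dots> = c *s ((*v) A ^^ k) v" by (simp add: coeff_monom sum.delta if_distrib cong: if_cong)
  finally show ?thesis .
qed

lemma mat_poly_apply_0: "mat_poly_apply A 0 v = 0"
  by (simp add: mat_poly_apply_def)

lemma mat_poly_apply_sum: "mat_poly_apply A (\<Sum>i\<in>I. f i) v = (\<Sum>i\<in>I. mat_poly_apply A (f i) v)"
  by (induct I rule: infinite_finite_induct) (simp_all add: mat_poly_apply_0 mat_poly_apply_add)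

lemma mat_poly_apply_linear_factor:
  "mat_poly_apply A ([:-a, 1:] * q) v = A *v mat_poly_apply A q v - a *s mat_poly_apply A q v"
proof -
  define N where "N = Suc (degree q)"
  have pCons: "mat_poly_apply A (pCons 0 q) v = A *v mat_poly_apply A q v"
  proof -
    have "degree (pCons 0 q) < Suc N" "degree q < N"
      unfolding N_def using degree_pCons_le[of 0 q] by linarith+
    then show ?thesis
      by (simp add: mat_poly_apply_bound sum.lessThan_Suc_shift vec.sum vector_scalar_commute
          del: sum.lessThan_Suc)
  qed
  have "[:-a, 1:] * q = smult (-a) q + pCons 0 q" by simp
  then show ?thesis
    by (simp only: mat_poly_apply_add mat_poly_apply_smult pCons) (simp add: vec_eq_iff)
qed

lemma mat_poly_apply_in_subspace:
  assumes "vec.subspace S" "\<forall>w\<in>S. A *v w \<in> S" "v \<in> S"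
  shows "mat_poly_apply A p v \<in> S"
proof -
  have "((*v) A ^^ k) v \<in> S" for k using assms by (induct k) auto
  then show ?thesis
    unfolding mat_poly_apply_def by (intro vec.subspace_sum[OF assms(1)] vec.subspace_scale[OF assms(1)])
qed

text \<open>A nonzero polynomial annihilating a nonzero vector of an invariant subspace splits into linear
  factors; the first factor that kills the partial product yields an eigenvector.\<close>

lemma eigenvector_of_annihilating_poly:
  fixes A :: "complex^'n^'n"
  assumes S: "vec.subspace S" "\<forall>w\<in>S. A *v w \<in> S"
  shows "p \<noteq> 0 \<Longrightarrow> v \<in> S \<Longrightarrow> v \<noteq> 0 \<Longrightarrow> mat_poly_apply A p v = 0 \<Longrightarrow>
    \<exists>u\<in>S. u \<noteq> 0 \<and> (\<exists>\<mu>. A *v u = \<mu> *s u)"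
proof (induct "degree p" arbitrary: p rule: less_induct)
  case less
  show ?case
  proof (cases "degree p = 0")
    case True
    then obtain c where "p = [:c:]" by (metis degree_eq_zeroE)
    with less.prems show ?thesis by (simp add: mat_poly_apply_def vec_eq_iff)
  next
    case False
    then have "\<not> constant (poly p)" by (simp add: constant_degree)
    then obtain a where "poly p a = 0" using fundamental_theorem_of_algebra by blast
    then obtain q where pq: "p = [:-a, 1:] * q" by (metis poly_eq_0_iff_dvd dvdE)
    with less.prems have q0: "q \<noteq> 0" by auto
    have "degree ([:-a, 1:] * q) = degree [:-a, 1:] + degree q" by (rule degree_mult_eq) (simp_all add: q0)
    then have dq: "degree q < degree p" using pq by simp
    define w where "w = mat_poly_apply A q v"
    have "w \<in> S" unfolding w_def by (rule mat_poly_apply_in_subspace[OF S less.prems(2)])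
    moreover have "A *v w = a *s w"
      using less.prems(4) unfolding pq mat_poly_apply_linear_factor w_def by simp
    ultimately show ?thesis using less.hyps[OF dq q0 less.prems(2,3)] unfolding w_def by blast
  qed
qed

lemma dependent_iterates_poly:
  fixes A :: "complex^'n^'n"
  shows "\<exists>p. p \<noteq> 0 \<and> mat_poly_apply A p v = 0"
proof (cases "inj_on (\<lambda>k. ((*v) A ^^ k) v) {..CARD('n)}")
  case False
  then obtain i j where ij: "i \<noteq> j" "((*v) A ^^ i) v = ((*v) A ^^ j) v"
    unfolding inj_on_def by auto
  let ?p = "monom (1::complex) i - monom 1 j"
  have "coeff ?p i = 1" using ij by (simp add: coeff_monom)
  then have "?p \<noteq> 0" by (metis coeff_0 zero_neq_one)
  moreover have "mat_poly_apply A ?p v = 0"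
  proof -
    have "mat_poly_apply A ?p v = mat_poly_apply A (monom 1 i + smult (-1) (monom 1 j)) v" by simp
    also have "\<dots> = 0"
      using ij(2) by (simp only: mat_poly_apply_add mat_poly_apply_smult mat_poly_apply_monom)
        (simp add: vec_eq_iff)
    finally show ?thesis .
  qed
  ultimately show ?thesis by blast
next
  case True
  let ?w = "\<lambda>k. ((*v) A ^^ k) v"
  let ?T = "?w ` {..CARD('n)}"
  have "vec.dim ?T \<le> CARD('n)"
    using vec.dim_subset_UNIV[of ?T] by (simp add: vec.dimension_def card_cart_basis)
  then have "vec.dependent ?T" using True by (intro vec.dependent_biggerset_general) (simp add: card_image)
  then obtain u where u: "\<exists>x\<in>?T. u x \<noteq> 0" "(\<Sum>x\<in>?T. u x *s x) = 0"
    using vec.dependent_finite[of ?T] by auto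
  let ?p = "\<Sum>k\<le>CARD('n). monom (u (?w k)) k"
  from u(1) obtain k where "k \<le> CARD('n)" "u (?w k) \<noteq> 0" by auto
  then have "coeff ?p k \<noteq> 0" by (simp add: coeff_sum coeff_monom)
  then have "?p \<noteq> 0" by auto
  moreover have "mat_poly_apply A ?p v = (\<Sum>x\<in>?T. u x *s x)"
    using sum.reindex[OF True, of "\<lambda>x. u x *s x"] by (simp add: mat_poly_apply_sum mat_poly_apply_monom)
  ultimately show ?thesis using u(2) by auto
qed

lemma invariant_subspace_has_eigenvector:
  fixes A :: "complex^'n^'n"
  assumes "vec.subspace S" "\<forall>w\<in>S. A *v w \<in> S" "v \<in> S" "v \<noteq> 0"
  shows "\<exists>u\<in>S. u \<noteq> 0 \<and> (\<exists>\<mu>. A *v u = \<mu> *s u)"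
  using dependent_iterates_poly[of A v] eigenvector_of_annihilating_poly[OF assms(1,2) _ assms(3,4)] by blast

lemma commuting_eigenvalue_diff:
  assumes AB: "A ** B = B ** A" and "cplx_eigenvalue (A - B) z"
  shows "\<exists>a b. cplx_eigenvalue A a \<and> cplx_eigenvalue B b \<and> z = a - b"
proof -
  obtain v where v: "v \<noteq> 0" "cmat (A - B) *v v = z *s v"
    using assms(2) by (auto simp: cplx_eigenvalue_def)
  let ?S = "{w. cmat (A - B) *v w = z *s w}"
  have "vec.subspace ?S"
    by (auto simp: vec.subspace_def vector_scalar_commute matrix_vector_right_distrib vec_eq_iff algebra_simps)
  moreover have "\<forall>w\<in>?S. cmat A *v w \<in> ?S"
  proof
    fix w assume w: "w \<in> ?S"
    have "(A - B) ** A = A ** (A - B)"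
      using AB by (simp add: vec_eq_iff matrix_matrix_mult_def sum_subtractf algebra_simps)
    then have "cmat (A - B) *v (cmat A *v w) = cmat A *v (cmat (A - B) *v w)"
      by (simp only: cmat_mult_vec_assoc)
    then show "cmat A *v w \<in> ?S" using w by (simp add: vector_scalar_commute)
  qed
  ultimately obtain u a where u: "u \<noteq> 0" "u \<in> ?S" "cmat A *v u = a *s u"
    using invariant_subspace_has_eigenvector v by blast
  have "cmat B *v u = (a - z) *s u"
    using u by (simp add: cmat_diff matrix_vector_mult_diff_rdistrib vec_eq_iff algebra_simps)
  then have "cplx_eigenvalue A a" "cplx_eigenvalue B (a - z)"
    unfolding cplx_eigenvalue_def using u by blast+
  then show ?thesis by force
qed

section \<open>The Hermitian inner product and orthonormal bases\<close>

definition cinner :: "complex^'n \<Rightarrow> complex^'n \<Rightarrow> complex" where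
  "cinner x y = (\<Sum>i\<in>UNIV. cnj (x $ i) * y $ i)"

lemma cinner_add_right: "cinner x (y + z) = cinner x y + cinner x z"
  and cinner_diff_right: "cinner x (y - z) = cinner x y - cinner x z"
  and cinner_smult_right: "cinner x (c *s y) = c * cinner x y"
  and cinner_smult_left: "cinner (c *s x) y = cnj c * cinner x y"
  and cinner_zero_right: "cinner x 0 = 0"
  and cinner_zero_left: "cinner 0 x = 0"
  and cinner_commute: "cinner x y = cnj (cinner y x)"
proof -
  show "cinner x (y + z) = cinner x y + cinner x z" by (simp add: cinner_def algebra_simps sum.distrib)
  show "cinner x (y - z) = cinner x y - cinner x z" by (simp add: cinner_def algebra_simps sum_subtractf)
  show "cinner x (c *s y) = c * cinner x y" by (simp add: cinner_def sum_distrib_left algebra_simps)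
  show "cinner (c *s x) y = cnj c * cinner x y" by (simp add: cinner_def sum_distrib_left algebra_simps)
  show "cinner x 0 = 0" "cinner 0 x = 0" by (simp_all add: cinner_def)
  show "cinner x y = cnj (cinner y x)" by (simp add: cinner_def mult.commute)
qed

lemma cinner_sum_right: "cinner x (\<Sum>i\<in>I. f i) = (\<Sum>i\<in>I. cinner x (f i))"
  by (induct I rule: infinite_finite_induct) (simp_all add: cinner_zero_right cinner_add_right)

lemma cinner_sum_left: "cinner (\<Sum>i\<in>I. f i) x = (\<Sum>i\<in>I. cinner (f i) x)"
  by (induct I rule: infinite_finite_induct)
     (simp_all add: cinner_zero_left cinner_def algebra_simps sum.distrib)

lemma norm_vec_power2: "norm (x :: 'a::real_normed_vector^'n) ^ 2 = (\<Sum>i\<in>UNIV. norm (x $ i) ^ 2)"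
  unfolding norm_vec_def L2_set_def by (simp add: sum_nonneg)

lemma cinner_self: "cinner x x = of_real (norm x ^ 2)"
proof -
  have "cinner x x = (\<Sum>i\<in>UNIV. of_real (norm (x $ i) ^ 2))"
    unfolding cinner_def by (rule sum.cong[OF refl]) (metis complex_norm_square mult.commute)
  also have "\<dots> = of_real (norm x ^ 2)" by (simp add: norm_vec_power2)
  finally show ?thesis .
qed

lemma cinner_cmat_right: "cinner x (cmat M *v y) = cinner (cmat (transpose M) *v x) y"
  unfolding cinner_def matrix_vector_mult_def
  by (simp add: sum_distrib_left sum_distrib_right transpose_def algebra_simps) (rule sum.swap)

definition orthonormal :: "(complex^'n) set \<Rightarrow> bool" where
  "orthonormal B \<longleftrightarrow> (\<forall>b\<in>B. cinner b b = 1) \<and> (\<forall>b\<in>B. \<forall>c\<in>B. b \<noteq> c \<longrightarrow> cinner b c = 0)"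

definition orthonormal_basis :: "(complex^'n) set \<Rightarrow> bool" where
  "orthonormal_basis B \<longleftrightarrow> finite B \<and> orthonormal B \<and> (\<forall>x. (\<Sum>b\<in>B. cinner b x *s b) = x)"

lemma orthonormal_nonzero: "orthonormal B \<Longrightarrow> b \<in> B \<Longrightarrow> b \<noteq> 0"
  by (auto simp: orthonormal_def cinner_zero_left)

lemma cinner_orthonormal_sum:
  assumes "orthonormal B" "finite B" "c \<in> B"
  shows "cinner c (\<Sum>b\<in>B. f b *s b) = f c"
proof -
  have "cinner c (\<Sum>b\<in>B. f b *s b) = (\<Sum>b\<in>B. if b = c then f c else 0)"
    unfolding cinner_sum_right cinner_smult_right
    by (rule sum.cong) (use assms in \<open>auto simp: orthonormal_def\<close>)
  then show ?thesis using assms by (simp add: sum.delta')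
qed

lemma card_orthonormal_le:
  assumes "orthonormal (B :: (complex^'n) set)" "finite B"
  shows "card B \<le> CARD('n)"
proof -
  have "vec.independent B"
    unfolding vec.independent_explicit
  proof (intro conjI allI impI ballI)
    fix c :: "complex^'n \<Rightarrow> complex" and v assume "(\<Sum>v\<in>B. c v *s v) = 0" "v \<in> B"
    then show "c v = 0" using cinner_orthonormal_sum[OF assms \<open>v \<in> B\<close>, of c] by (simp add: cinner_zero_right)
  qed fact
  then have "card B \<le> vec.dim B" using vec.independent_bound_general by blast
  also have "\<dots> \<le> CARD('n)" using vec.dim_subset_UNIV[of B] by (simp add: vec.dimension_def card_cart_basis)
  finally show ?thesis .
qed

lemma parseval:
  assumes "orthonormal B" "finite B"
  shows "norm (\<Sum>b\<in>B. f b *s b) ^ 2 = (\<Sum>b\<in>B. cmod (f b) ^ 2)"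
proof -
  let ?S = "\<Sum>b\<in>B. f b *s b"
  have "complex_of_real (norm ?S ^ 2) = cinner ?S ?S" by (simp add: cinner_self)
  also have "\<dots> = (\<Sum>b\<in>B. cnj (f b) * cinner b ?S)"
    by (simp add: cinner_sum_left cinner_smult_left)
  also have "\<dots> = (\<Sum>b\<in>B. cnj (f b) * f b)"
    by (rule sum.cong) (simp_all add: cinner_orthonormal_sum[OF assms])
  also have "\<dots> = (\<Sum>b\<in>B. complex_of_real (cmod (f b) ^ 2))"
    by (rule sum.cong[OF refl]) (metis complex_norm_square mult.commute)
  also have "\<dots> = complex_of_real (\<Sum>b\<in>B. cmod (f b) ^ 2)" by (rule of_real_sum[symmetric])
  finally show ?thesis using of_real_eq_iff by blast
qed

lemma matrix_eq_on_orthonormal_basis: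
  fixes M N :: "complex^'n^'n"
  assumes "orthonormal_basis B" "\<And>b. b \<in> B \<Longrightarrow> M *v b = N *v b"
  shows "M = N"
proof (rule iffD2[OF matrix_eq], rule allI)
  fix x
  have x: "x = (\<Sum>b\<in>B. cinner b x *s b)" using assms(1) by (simp add: orthonormal_basis_def)
  have "M *v x = (\<Sum>b\<in>B. cinner b x *s (M *v b))" by (subst x) (simp add: vec.sum vector_scalar_commute)
  also have "\<dots> = (\<Sum>b\<in>B. cinner b x *s (N *v b))" using assms(2) by simp
  also have "\<dots> = N *v x" by (subst (2) x) (simp add: vec.sum vector_scalar_commute)
  finally show "M *v x = N *v x" .
qed

definition vre :: "complex^'n \<Rightarrow> real^'n" where "vre x = (\<chi> i. Re (x $ i))"
definition vim :: "complex^'n \<Rightarrow> real^'n" where "vim x = (\<chi> i. Im (x $ i))"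
definition cvec :: "real^'n \<Rightarrow> complex^'n" where "cvec x = (\<chi> i. complex_of_real (x $ i))"
definition vcnj :: "complex^'n \<Rightarrow> complex^'n" where "vcnj x = (\<chi> i. cnj (x $ i))"

lemma norm_power2_vre_vim: "norm x ^ 2 = norm (vre x) ^ 2 + norm (vim x) ^ 2"
  by (simp add: norm_vec_power2 vre_def vim_def cmod_power2 sum.distrib)

lemma vre_cmat_mult: "vre (cmat M *v x) = M *v vre x"
  and vim_cmat_mult: "vim (cmat M *v x) = M *v vim x"
  by (simp_all add: vec_eq_iff vre_def vim_def matrix_vector_mult_def Re_sum Im_sum)

lemma norm_cvec: "norm (cvec x) = norm x"
  by (simp add: norm_vec_def cvec_def)

lemma cmat_mult_cvec: "cmat M *v cvec x = cvec (M *v x)"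
  by (simp add: vec_eq_iff cvec_def matrix_vector_mult_def)

lemma norm_smult_cvec: "norm (c *s (x :: complex^'n)) = cmod c * norm x"
proof -
  have "norm (c *s x) ^ 2 = (cmod c * norm x) ^ 2"
    by (simp add: norm_vec_power2 norm_mult power_mult_distrib sum_distrib_left)
  then show ?thesis by (simp add: power2_eq_iff_nonneg)
qed

lemma vcnj_vcnj: "vcnj (vcnj x) = x"
  and vcnj_smult: "vcnj (c *s x) = cnj c *s vcnj x"
  and cmat_mult_vcnj: "cmat M *v vcnj x = vcnj (cmat M *v x)"
  and cnj_matrix_mult: "map_matrix cnj N *v x = vcnj (N *v vcnj x)"
  by (simp_all add: vcnj_def vec_eq_iff matrix_vector_mult_def)

lemma norm_cmat_mult_le: "norm (cmat M *v x) \<le> spec_norm M * norm x"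
proof -
  have "norm (cmat M *v x) ^ 2 = norm (M *v vre x) ^ 2 + norm (M *v vim x) ^ 2"
    by (simp only: norm_power2_vre_vim vre_cmat_mult vim_cmat_mult)
  also have "\<dots> \<le> (spec_norm M * norm (vre x)) ^ 2 + (spec_norm M * norm (vim x)) ^ 2"
    by (intro add_mono power_mono spec_norm_bound norm_ge_zero)
  also have "\<dots> = (spec_norm M * norm x) ^ 2"
    by (simp only: power_mult_distrib norm_power2_vre_vim[of x] distrib_left)
  finally show ?thesis by (rule power2_le_imp_le) (simp add: spec_norm_nonneg)
qed

lemma norm_cmat_orthogonal:
  assumes "orthogonal_matrix V"
  shows "norm (cmat V *v x) = norm x"
proof -
  have "orthogonal_transformation ((*v) V)"
    using assms orthogonal_transformation_matrix[of "(*v) V"] by simp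
  then have "norm (cmat V *v x) ^ 2 = norm x ^ 2"
    by (simp add: norm_power2_vre_vim vre_cmat_mult vim_cmat_mult orthogonal_transformation_norm)
  then show ?thesis by (simp add: power2_eq_iff_nonneg)
qed

lemma spec_norm_le_eigenvalues:
  assumes B: "orthonormal_basis B"
    and eigen: "\<And>b. b \<in> B \<Longrightarrow> cmat M *v b = \<mu> b *s b"
    and bound: "\<And>b. b \<in> B \<Longrightarrow> cmod (\<mu> b) \<le> c"
  shows "spec_norm M \<le> c"
proof -
  have fB: "finite B" and oB: "orthonormal B" and expand: "\<And>x. (\<Sum>b\<in>B. cinner b x *s b) = x"
    using B by (auto simp: orthonormal_basis_def)
  have "B \<noteq> {}" using expand[of "vec 1"] by (auto simp: vec_eq_iff)
  then obtain b where "b \<in> B" by blast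
  then have c: "0 \<le> c" using bound[of b] norm_ge_zero[of "\<mu> b"] by linarith
  have "norm (M *v x) \<le> c * norm x" for x
  proof -
    define y where "y = cvec x"
    have "norm (M *v x) = norm (cmat M *v y)" by (simp add: y_def cmat_mult_cvec norm_cvec)
    also have "cmat M *v y = (\<Sum>b\<in>B. (\<mu> b * cinner b y) *s b)"
      by (subst (1) expand[of y, symmetric]) (simp add: vec.sum vector_scalar_commute eigen vector_smult_assoc mult.commute)
    finally have "norm (M *v x) ^ 2 = (\<Sum>b\<in>B. cmod (\<mu> b * cinner b y) ^ 2)"
      by (simp add: parseval[OF oB fB])
    also have "\<dots> \<le> (\<Sum>b\<in>B. c ^ 2 * cmod (cinner b y) ^ 2)"
    proof (rule sum_mono)
      fix b assume "b \<in> B"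
      then have "cmod (\<mu> b) ^ 2 \<le> c ^ 2" by (intro power_mono bound) simp_all
      then show "cmod (\<mu> b * cinner b y) ^ 2 \<le> c ^ 2 * cmod (cinner b y) ^ 2"
        unfolding norm_mult power_mult_distrib by (rule mult_right_mono) simp
    qed
    also have "\<dots> = c ^ 2 * norm y ^ 2"
      using parseval[OF oB fB, of "\<lambda>b. cinner b y"] by (simp add: expand sum_distrib_left)
    finally have "norm (M *v x) ^ 2 \<le> (c * norm x) ^ 2" by (simp add: y_def norm_cvec power_mult_distrib)
    then show ?thesis by (rule power2_le_imp_le) (simp add: c)
  qed
  then show ?thesis unfolding spec_norm_def by (rule onorm_le)
qed

section \<open>Orthogonal matrices have a unitary eigenbasis\<close>

lemma orthogonal_matrix_eigen_transpose:
  assumes V: "orthogonal_matrix V" and eigen: "cmat V *v b = \<mu> *s b" and "b \<noteq> 0"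
  shows "cmat (transpose V) *v b = inverse \<mu> *s b"
proof -
  have "cmat (transpose V) *v (cmat V *v b) = b"
    using V by (simp add: cmat_mult_vec_assoc orthogonal_matrix_def cmat_mat_1)
  then have b: "\<mu> *s (cmat (transpose V) *v b) = b" by (simp add: eigen vector_scalar_commute)
  then have "\<mu> \<noteq> 0" using \<open>b \<noteq> 0\<close> by auto
  then show ?thesis using arg_cong[OF b, of "\<lambda>x. inverse \<mu> *s x"] by (simp add: vector_smult_assoc)
qed

lemma orthogonal_complement_invariant:
  assumes V: "orthogonal_matrix V" and oB: "orthonormal B"
    and eigen: "\<forall>b\<in>B. \<exists>\<mu>. cmat V *v b = \<mu> *s b"
    and w: "\<forall>b\<in>B. cinner b w = 0"
  shows "\<forall>b\<in>B. cinner b (cmat V *v w) = 0"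
proof
  fix b assume b: "b \<in> B"
  then obtain \<mu> where "cmat V *v b = \<mu> *s b" using eigen by blast
  then have "cmat (transpose V) *v b = inverse \<mu> *s b"
    using orthogonal_matrix_eigen_transpose[OF V] orthonormal_nonzero[OF oB b] by blast
  then show "cinner b (cmat V *v w) = 0" by (simp add: cinner_cmat_right cinner_smult_left w b)
qed

lemma orthonormal_insert_eigenvector:
  assumes V: "orthogonal_matrix V" and fB: "finite B" and oB: "orthonormal B"
    and eigen: "\<forall>b\<in>B. \<exists>\<mu>. cmat V *v b = \<mu> *s b"
    and w: "w \<noteq> 0" "\<forall>b\<in>B. cinner b w = 0"
  obtains u where "u \<notin> B" "orthonormal (insert u B)" "\<exists>\<mu>. cmat V *v u = \<mu> *s u"
proof -
  let ?S = "{w. \<forall>b\<in>B. cinner b w = 0}"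
  have "vec.subspace ?S"
    by (auto simp: vec.subspace_def cinner_add_right cinner_smult_right cinner_zero_right)
  moreover have "\<forall>w\<in>?S. cmat V *v w \<in> ?S"
    using orthogonal_complement_invariant[OF V oB eigen] by blast
  ultimately obtain v \<mu> where v: "v \<in> ?S" "v \<noteq> 0" "cmat V *v v = \<mu> *s v"
    using invariant_subspace_has_eigenvector w by blast
  define u where "u = of_real (1 / norm v) *s v"
  have "cinner u u = cnj (of_real (1 / norm v)) * (of_real (1 / norm v) * cinner v v)"
    by (simp only: u_def cinner_smult_left cinner_smult_right mult.left_commute)
  also have "\<dots> = of_real ((1 / norm v) * (1 / norm v) * norm v ^ 2)"
    by (simp only: cinner_self complex_cnj_complex_of_real of_real_mult mult.assoc)
  finally have u1: "cinner u u = 1" using v(2) by (simp add: power2_eq_square)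
  have uS: "u \<in> ?S" using v(1) by (simp add: u_def cinner_smult_right)
  show ?thesis
  proof
    show "u \<notin> B" using uS u1 by auto
    have "cinner u b = 0" if "b \<in> B" for b
      using uS that cinner_commute[of u b] by simp
    then show "orthonormal (insert u B)"
      using oB u1 uS by (auto simp: orthonormal_def)
    show "\<exists>\<mu>. cmat V *v u = \<mu> *s u"
      using v(3) by (auto simp: u_def vector_scalar_commute vector_smult_assoc mult.commute)
  qed
qed

lemma orthonormal_basisI:
  assumes fB: "finite B" and oB: "orthonormal B" and complete: "\<And>w. \<forall>b\<in>B. cinner b w = 0 \<Longrightarrow> w = 0"
  shows "orthonormal_basis B"
proof -
  have "x - (\<Sum>b\<in>B. cinner b x *s b) = 0" for x
    by (rule complete) (simp add: cinner_diff_right cinner_orthonormal_sum[OF oB fB])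
  then show ?thesis using fB oB by (simp add: orthonormal_basis_def)
qed

text \<open>A maximal orthonormal set of eigenvectors is a basis, since the orthogonal complement of any
  such set is invariant and would otherwise contain a further eigenvector.\<close>

theorem orthogonal_matrix_eigenbasis:
  assumes V: "orthogonal_matrix (V :: real^'n^'n)"
  obtains B where "orthonormal_basis B" "\<forall>b\<in>B. \<exists>\<mu>. cmat V *v b = \<mu> *s b"
proof -
  define P where "P B \<longleftrightarrow> finite B \<and> orthonormal B \<and> (\<forall>b\<in>B. \<exists>\<mu>. cmat V *v b = \<mu> *s b)"
    for B :: "(complex^'n) set"
  obtain B where B: "P B" and maxB: "\<And>C. P C \<Longrightarrow> card C \<le> card B"
  proof (rule ex_has_greatest_nat[of P "{}" card "Suc CARD('n)", THEN exE])
    show "P {}" by (simp add: P_def orthonormal_def)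
    show "\<forall>C. P C \<longrightarrow> card C < Suc CARD('n)"
      using card_orthonormal_le by (auto simp: P_def less_Suc_eq_le)
  qed blast
  then have fB: "finite B" and oB: "orthonormal B" and eigen: "\<forall>b\<in>B. \<exists>\<mu>. cmat V *v b = \<mu> *s b"
    by (auto simp: P_def)
  have "w = 0" if orth: "\<forall>b\<in>B. cinner b w = 0" for w
  proof (rule ccontr)
    assume "w \<noteq> 0"
    then obtain u where "u \<notin> B" "orthonormal (insert u B)" "\<exists>\<mu>. cmat V *v u = \<mu> *s u"
      using orthonormal_insert_eigenvector[OF V fB oB eigen _ orth] by blast
    then have "P (insert u B)" using fB eigen by (simp add: P_def)
    then show False using maxB[of "insert u B"] fB \<open>u \<notin> B\<close> by simp
  qed
  then have "orthonormal_basis B" by (rule orthonormal_basisI[OF fB oB])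
  then show ?thesis using eigen by (rule that)
qed

section \<open>Eigenvalues of orthogonal matrices close to the identity\<close>

lemma orthogonal_eigenvalue_bounds:
  assumes V: "orthogonal_matrix V" and eigen: "cmat V *v w = \<mu> *s w" and "w \<noteq> 0"
  shows "cmod \<mu> = 1" "cmod (\<mu> - 1) \<le> spec_norm (V - mat 1)"
proof -
  have nw: "norm w > 0" using \<open>w \<noteq> 0\<close> by simp
  have "cmod \<mu> * norm w = norm w" using norm_cmat_orthogonal[OF V, of w] by (simp add: eigen norm_smult_cvec)
  then show "cmod \<mu> = 1" using nw by simp
  have "cmat (V - mat 1) *v w = (\<mu> - 1) *s w"
    by (simp add: cmat_diff cmat_mat_1 matrix_vector_mult_diff_rdistrib eigen vec_eq_iff algebra_simps)
  then have "cmod (\<mu> - 1) * norm w \<le> spec_norm (V - mat 1) * norm w"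
    using norm_cmat_mult_le[of "V - mat 1" w] by (simp only: norm_smult_cvec)
  then show "cmod (\<mu> - 1) \<le> spec_norm (V - mat 1)" using nw by simp
qed

text \<open>The chord from \<open>1\<close> to \<open>e\<^sup>i\<^sup>t\<close> has length \<open>2 \<bar>sin (t/2)\<bar>\<close>.\<close>

lemma abs_le_arcsin_of_chord_le:
  fixes t s :: real
  assumes "\<bar>t\<bar> < pi/2" "cmod (exp (\<i> * of_real t) - 1) \<le> s" "s \<le> 1"
  shows "\<bar>t\<bar> \<le> 2 * arcsin (s/2)"
proof -
  have "cmod (exp (\<i> * of_real t) - 1) ^ 2 = (cos t - 1) ^ 2 + (sin t) ^ 2"
    by (simp add: exp_Euler cmod_power2 cos_of_real sin_of_real)
  also have "\<dots> = 2 - 2 * cos t" by (simp add: power2_eq_square algebra_simps sin_squared_eq)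
  also have "\<dots> = 4 * sin (t/2) ^ 2" using cos_double_sin[of "t/2"] by simp
  finally have "4 * sin (t/2) ^ 2 \<le> s ^ 2" using assms(2) by (metis norm_ge_zero power_mono)
  then have "(2 * \<bar>sin (t/2)\<bar>) ^ 2 \<le> s ^ 2" by (simp add: power_mult_distrib)
  moreover have "s \<ge> 0" using assms(2) norm_ge_zero order_trans by blast
  ultimately have "2 * \<bar>sin (t/2)\<bar> \<le> s" by (rule power2_le_imp_le)
  moreover have "\<bar>sin (t/2)\<bar> = sin \<bar>t/2\<bar>"
  proof (cases "t \<ge> 0")
    case True
    then have "sin (t/2) \<ge> 0" using assms(1) by (intro sin_ge_zero) auto
    then show ?thesis using True by simp
  next
    case False
    then have "sin (-t/2) \<ge> 0" using assms(1) by (intro sin_ge_zero) auto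
    then show ?thesis using False by simp
  qed
  ultimately have sin_le: "sin \<bar>t/2\<bar> \<le> s/2" by simp
  have "\<bar>t/2\<bar> = arcsin (sin \<bar>t/2\<bar>)" using assms(1) by (intro arcsin_sin[symmetric]) auto
  also have "\<dots> \<le> arcsin (s/2)"
    using sin_le assms(3) sin_ge_minus_one[of "\<bar>t/2\<bar>"] by (intro arcsin_le_arcsin) linarith+
  finally show ?thesis by simp
qed

lemma cmod_Ln_le_arcsin:
  assumes "cmod \<mu> = 1" "cmod (\<mu> - 1) \<le> s" "s < 1"
  shows "0 < Re \<mu>" "cmod (Ln \<mu>) \<le> 2 * arcsin (s/2)"
proof -
  show re: "0 < Re \<mu>" using abs_Re_le_cmod[of "\<mu> - 1"] assms(2,3) by simp
  then have "\<mu> \<noteq> 0" by auto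
  define t where "t = Im (Ln \<mu>)"
  have "Ln \<mu> = \<i> * of_real t" using \<open>\<mu> \<noteq> 0\<close> assms(1) by (simp add: t_def complex_eq_iff)
  moreover have "\<bar>t\<bar> < pi/2" unfolding t_def by (rule Re_Ln_pos_lt_imp[OF re])
  moreover have "exp (\<i> * of_real t) = \<mu>" using \<open>\<mu> \<noteq> 0\<close> by (simp flip: \<open>Ln \<mu> = \<i> * of_real t\<close>)
  ultimately show "cmod (Ln \<mu>) \<le> 2 * arcsin (s/2)"
    using abs_le_arcsin_of_chord_le assms(2,3) by (simp add: norm_mult)
qed

lemma le_tan:
  fixes x :: real
  assumes "0 \<le> x" "x < pi/2"
  shows "x \<le> tan x"
proof -
  have "sin 0 - 0 * cos 0 \<le> sin x - x * cos x"
  proof (rule DERIV_nonneg_imp_increasing_open[OF assms(1)])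
    fix y :: real assume y: "0 < y" "y < x"
    have "((\<lambda>y. sin y - y * cos y) has_real_derivative y * sin y) (at y)"
      by (auto intro!: derivative_eq_intros)
    moreover have "y * sin y \<ge> 0" using y assms sin_gt_zero[of y] by simp
    ultimately show "\<exists>d. ((\<lambda>y. sin y - y * cos y) has_real_derivative d) (at y) \<and> d \<ge> 0" by blast
  qed (intro continuous_intros)
  moreover have "cos x > 0" using assms by (intro cos_gt_zero_pi) auto
  ultimately show ?thesis by (simp add: tan_def pos_le_divide_eq)
qed

text \<open>The right-hand side is \<open>tan (2 arcsin (r/2))\<close>.\<close>

lemma double_arcsin_half_lt:
  fixes r s :: real
  assumes "0 \<le> s" "s < r" "r < 1"
  shows "2 * arcsin (s/2) < r * sqrt (1 - r^2 / 4) / (1 - r^2 / 2)"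
proof -
  define a where "a = arcsin (r/2)"
  have "2 * arcsin (s/2) < 2 * a" unfolding a_def using arcsin_less_arcsin[of "s/2" "r/2"] assms by simp
  have sa: "sin a = r/2" and ca: "cos a = sqrt (1 - (r/2)^2)"
    unfolding a_def using assms by (simp_all add: cos_arcsin)
  have "0 \<le> a" unfolding a_def using assms by (intro arcsin_nonneg) auto
  moreover have "a \<le> arcsin (1/2)" unfolding a_def using assms by (intro arcsin_le_arcsin) auto
  then have "a \<le> pi / 6" using arcsin_sin[of "pi/6"] by (simp add: sin_30)
  ultimately have "2 * a \<le> tan (2 * a)" using pi_gt_zero by (intro le_tan) linarith+
  also have "\<dots> = r * sqrt (1 - r^2 / 4) / (1 - r^2 / 2)"
    by (simp add: tan_def sin_double cos_double_sin sa ca power_divide)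
  finally show ?thesis using \<open>2 * arcsin (s/2) < 2 * a\<close> by linarith
qed

section \<open>Injectivity of the matrix exponential on commuting matrices\<close>

text \<open>If \<open>exp Y = I\<close>, then \<open>Y \<cdot> exprel Y = 0\<close>; an eigenvalue \<open>z\<close> of \<open>Y\<close> with \<open>exprel z = 0\<close> would satisfy
  \<open>exp z = 1\<close> and \<open>z \<noteq> 0\<close>, so for \<open>\<bar>Im z\<bar> < 2\<pi>\<close> the factor \<open>exprel Y\<close> is invertible.\<close>

lemma mat_exp_eq_mat_1_imp_0:
  assumes exp: "mat_exp Y = mat 1"
    and strip: "\<And>z. cplx_eigenvalue Y z \<Longrightarrow> \<bar>Im z\<bar> < 2 * pi"
  shows "Y = 0"
proof -
  define P where "P = mat_exprel Y"
  have YP: "Y ** P = 0" unfolding P_def mult_mat_exprel exp by simp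
  have PY: "P ** Y = Y ** P" unfolding P_def by (rule mat_exprel_commute[symmetric]) simp
  have P_inj: "w = 0" if w: "cmat P *v w = 0" for w
  proof (rule ccontr)
    assume "w \<noteq> 0"
    let ?S = "{w. cmat P *v w = 0}"
    have "vec.subspace ?S" by (auto simp: vec.subspace_def vector_scalar_commute matrix_vector_right_distrib)
    moreover have "\<forall>w\<in>?S. cmat Y *v w \<in> ?S"
    proof
      fix w assume "w \<in> ?S"
      moreover have "cmat P *v (cmat Y *v w) = cmat Y *v (cmat P *v w)"
        by (simp only: cmat_mult_vec_assoc PY)
      ultimately show "cmat Y *v w \<in> ?S" by simp
    qed
    ultimately obtain u z where u: "u \<in> ?S" "u \<noteq> 0" "cmat Y *v u = z *s u"
      using invariant_subspace_has_eigenvector w \<open>w \<noteq> 0\<close> by blast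
    have "exprel z *s u = 0" using u(1) mat_exprel_eigen[OF u(3)] by (simp add: P_def)
    then have "exprel z = 0" using u(2) by (auto simp: vec_eq_iff)
    then have "exp z = 1" using mult_exprel[of z] by simp
    then obtain n :: int where n: "Re z = 0" "Im z = of_int (2 * n) * pi" by (auto simp: exp_eq_1)
    have "\<bar>Im z\<bar> < 2 * pi" using strip u(2,3) by (auto simp: cplx_eigenvalue_def)
    then have "n = 0" using n(2) pi_gt_zero by (simp add: abs_mult)
    then have "z = 0" using n by (simp add: complex_eq_iff)
    then show False using \<open>exprel z = 0\<close> by (simp add: exprel_0)
  qed
  have "cmat Y *v w = cmat 0 *v w" for w
    using P_inj[of "cmat Y *v w"] YP by (simp add: cmat_mult_vec_assoc PY cmat_zero)
  then have "cmat Y = cmat 0" using matrix_eq by blast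
  then show ?thesis by (simp only: cmat_inject)
qed

theorem mat_exp_inj_on_strip:
  assumes AB: "A ** B = B ** A" and exp: "mat_exp A = mat_exp B"
    and strip: "\<And>z. cplx_eigenvalue A z \<Longrightarrow> \<bar>Im z\<bar> < pi" "\<And>z. cplx_eigenvalue B z \<Longrightarrow> \<bar>Im z\<bar> < pi"
  shows "A = B"
proof -
  have "A ** (- B) = (- B) ** A"
    using AB by (simp add: vec_eq_iff matrix_matrix_mult_def sum_negf)
  then have "mat_exp (A - B) = mat_exp B ** mat_exp (- B)"
    using mat_exp_add[of A "- B"] exp by simp
  also have "\<dots> = mat 1" using mat_exp_uminus_mult[of "- B"] by simp
  finally have "mat_exp (A - B) = mat 1" .
  moreover have "\<bar>Im z\<bar> < 2 * pi" if z: "cplx_eigenvalue (A - B) z" for z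
  proof -
    obtain a b where "cplx_eigenvalue A a" "cplx_eigenvalue B b" "z = a - b"
      using commuting_eigenvalue_diff[OF AB z] by blast
    then show ?thesis using strip[of a] strip(2)[of b] by (simp add: abs_diff_less_iff abs_less_iff)
  qed
  ultimately have "A - B = 0" by (rule mat_exp_eq_mat_1_imp_0)
  then show ?thesis by simp
qed

section \<open>The logarithm of an orthogonal matrix close to the identity\<close>

locale orthogonal_eigenbasis =
  fixes V :: "real^'n^'n" and B :: "(complex^'n) set"
  assumes orthogonal: "orthogonal_matrix V" and close: "spec_norm (V - mat 1) < 1"
    and basis: "orthonormal_basis B" and eigen: "\<forall>b\<in>B. \<exists>\<mu>. cmat V *v b = \<mu> *s b"
begin

definition eigval :: "complex^'n \<Rightarrow> complex" where
  "eigval b = (SOME \<mu>. cmat V *v b = \<mu> *s b)"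

lemma finite_B: "finite B" and orthonormal_B: "orthonormal B"
  and expand: "(\<Sum>b\<in>B. cinner b x *s b) = x"
  using basis by (auto simp: orthonormal_basis_def)

lemma eigval: "b \<in> B \<Longrightarrow> cmat V *v b = eigval b *s b"
  unfolding eigval_def using eigen by (auto intro: someI_ex)

lemma eigenvalue_bounds:
  assumes "cmat V *v w = \<mu> *s w" "w \<noteq> 0"
  shows "0 < Re \<mu>" "cmod (Ln \<mu>) \<le> 2 * arcsin (spec_norm (V - mat 1) / 2)"
  using cmod_Ln_le_arcsin[OF orthogonal_eigenvalue_bounds[OF orthogonal assms] close] by auto

lemma eigval_bounds:
  assumes "b \<in> B"
  shows "0 < Re (eigval b)" "cmod (Ln (eigval b)) \<le> 2 * arcsin (spec_norm (V - mat 1) / 2)"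
  using eigenvalue_bounds[OF eigval[OF assms] orthonormal_nonzero[OF orthonormal_B assms]] by auto

definition log_cmat :: "complex^'n^'n" where
  "log_cmat = (\<chi> i j. \<Sum>b\<in>B. Ln (eigval b) * cnj (b $ j) * b $ i)"

lemma log_cmat_mult_vec: "log_cmat *v x = (\<Sum>b\<in>B. (Ln (eigval b) * cinner b x) *s b)"
proof -
  have "(log_cmat *v x) $ i = (\<Sum>b\<in>B. (Ln (eigval b) * cinner b x) *s b) $ i" for i
  proof -
    have "(log_cmat *v x) $ i = (\<Sum>j\<in>UNIV. \<Sum>b\<in>B. Ln (eigval b) * cnj (b $ j) * b $ i * x $ j)"
      by (simp add: log_cmat_def matrix_vector_mult_def sum_distrib_right)
    also have "\<dots> = (\<Sum>b\<in>B. \<Sum>j\<in>UNIV. Ln (eigval b) * cnj (b $ j) * b $ i * x $ j)" by (rule sum.swap)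
    also have "\<dots> = (\<Sum>b\<in>B. (Ln (eigval b) * cinner b x) * b $ i)"
      by (simp add: cinner_def sum_distrib_left sum_distrib_right mult_ac)
    finally show ?thesis by (simp add: sum_component)
  qed
  then show ?thesis by (simp add: vec_eq_iff)
qed

text \<open>\<open>log_cmat\<close> acts as \<open>Ln \<mu>\<close> on the whole \<open>\<mu>\<close>-eigenspace of \<open>V\<close>, since the coordinates of an eigenvector
  vanish on basis vectors with a different eigenvalue.\<close>

lemma log_cmat_eigen:
  assumes w: "cmat V *v w = \<mu> *s w"
  shows "log_cmat *v w = Ln \<mu> *s w"
proof -
  have "cinner b w = 0 \<or> eigval b = \<mu>" if b: "b \<in> B" for b
  proof -
    have "\<mu> * cinner b w = cinner b (cmat V *v w)" by (simp add: w cinner_smult_right)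
    also have "cmat V *v w = (\<Sum>c\<in>B. (cinner c w * eigval c) *s c)"
      by (subst (1) expand[of w, symmetric]) (simp add: vec.sum vector_scalar_commute eigval vector_smult_assoc)
    finally have "\<mu> * cinner b w = eigval b * cinner b w"
      using cinner_orthonormal_sum[OF orthonormal_B finite_B b, of "\<lambda>c. cinner c w * eigval c"]
      by (simp add: mult.commute)
    then show ?thesis by (metis mult_cancel_right)
  qed
  then have "log_cmat *v w = (\<Sum>b\<in>B. (Ln \<mu> * cinner b w) *s b)"
    unfolding log_cmat_mult_vec by (intro sum.cong) auto
  also have "\<dots> = Ln \<mu> *s (\<Sum>b\<in>B. cinner b w *s b)"
    by (simp add: vec.scale_sum_right vector_smult_assoc)
  also have "\<dots> = Ln \<mu> *s w" by (simp only: expand)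
  finally show ?thesis .
qed

text \<open>\<open>log_cmat\<close> commutes with conjugation because \<open>Ln (cnj \<mu>) = cnj (Ln \<mu>)\<close> away from the branch cut,
  so it is the complexification of a real matrix.\<close>

lemma cnj_log_cmat: "map_matrix cnj log_cmat = log_cmat"
proof (rule matrix_eq_on_orthonormal_basis[OF basis])
  fix b assume b: "b \<in> B"
  have "cmat V *v vcnj b = cnj (eigval b) *s vcnj b" by (simp add: cmat_mult_vcnj eigval[OF b] vcnj_smult)
  then have "log_cmat *v vcnj b = Ln (cnj (eigval b)) *s vcnj b" by (rule log_cmat_eigen)
  moreover have "eigval b \<notin> \<real>\<^sub>\<le>\<^sub>0" using eigval_bounds(1)[OF b] by (auto simp: complex_nonpos_Reals_iff)
  then have "Ln (cnj (eigval b)) = cnj (Ln (eigval b))" by (simp add: cnj_Ln)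
  ultimately show "map_matrix cnj log_cmat *v b = log_cmat *v b"
    by (simp add: cnj_matrix_mult vcnj_smult vcnj_vcnj log_cmat_eigen[OF eigval[OF b]])
qed

definition log_mat :: "real^'n^'n" where "log_mat = map_matrix Re log_cmat"

lemma cmat_log_mat: "cmat log_mat = log_cmat"
proof -
  have "cnj (log_cmat $ i $ j) = log_cmat $ i $ j" for i j
    using arg_cong[OF cnj_log_cmat, of "\<lambda>M. M $ i $ j"] by simp
  then have "Im (log_cmat $ i $ j) = 0" for i j by (metis Reals_cnj_iff complex_is_Real_iff)
  then show ?thesis by (simp add: log_mat_def vec_eq_iff complex_eq_iff)
qed

lemma log_mat_eigen: "b \<in> B \<Longrightarrow> cmat log_mat *v b = Ln (eigval b) *s b"
  unfolding cmat_log_mat using log_cmat_eigen eigval by blast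

lemma mat_exp_log_mat: "mat_exp log_mat = V"
proof -
  have "cmat (mat_exp log_mat) = cmat V"
  proof (rule matrix_eq_on_orthonormal_basis[OF basis])
    fix b assume b: "b \<in> B"
    have "eigval b \<noteq> 0" using eigval_bounds(1)[OF b] by auto
    then show "cmat (mat_exp log_mat) *v b = cmat V *v b"
      using mat_exp_eigen[OF log_mat_eigen[OF b]] by (simp add: eigval[OF b])
  qed
  then show ?thesis by (simp add: cmat_inject)
qed

lemma log_mat_eigenvalue:
  assumes "cplx_eigenvalue log_mat l"
  shows "\<bar>Im l\<bar> < pi/2"
proof -
  obtain v where v: "v \<noteq> 0" "cmat log_mat *v v = l *s v" using assms by (auto simp: cplx_eigenvalue_def)
  have "\<exists>b\<in>B. cinner b v \<noteq> 0"
    using expand[of v] v(1) by (metis (no_types, lifting) sum.neutral vector_smult_lzero)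
  then obtain b where b: "b \<in> B" "cinner b v \<noteq> 0" by blast
  have "cinner b (cmat log_mat *v v) = Ln (eigval b) * cinner b v"
    unfolding cmat_log_mat log_cmat_mult_vec using cinner_orthonormal_sum[OF orthonormal_B finite_B b(1)] by simp
  then have "l = Ln (eigval b)" using b(2) by (simp add: v(2) cinner_smult_right)
  then show ?thesis using Re_Ln_pos_lt_imp[OF eigval_bounds(1)[OF b(1)]] by simp
qed

lemma spec_norm_log_mat: "spec_norm log_mat \<le> 2 * arcsin (spec_norm (V - mat 1) / 2)"
  using spec_norm_le_eigenvalues[OF basis log_mat_eigen eigval_bounds(2)] .

lemma log_mat_commute:
  assumes XV: "X ** V = V ** X"
  shows "log_mat ** X = X ** log_mat"
proof -
  have "cmat log_mat ** cmat X = cmat X ** cmat log_mat"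
  proof (rule matrix_eq_on_orthonormal_basis[OF basis])
    fix b assume b: "b \<in> B"
    have "cmat V *v (cmat X *v b) = eigval b *s (cmat X *v b)"
      by (simp add: cmat_mult_vec_assoc flip: XV) (simp add: eigval[OF b] vector_scalar_commute flip: cmat_mult_vec_assoc)
    then have "cmat log_mat *v (cmat X *v b) = Ln (eigval b) *s (cmat X *v b)"
      unfolding cmat_log_mat by (rule log_cmat_eigen)
    then show "(cmat log_mat ** cmat X) *v b = (cmat X ** cmat log_mat) *v b"
      by (simp add: log_mat_eigen[OF b] vector_scalar_commute flip: matrix_vector_mul_assoc)
  qed
  then show ?thesis by (simp flip: cmat_mult add: cmat_inject)
qed

lemma principal_log_eq_log_mat: "principal_log V = log_mat"
  unfolding principal_log_def
proof (rule the_equality)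
  have strip: "\<bar>Im l\<bar> < pi" if "cplx_eigenvalue log_mat l" for l
    using log_mat_eigenvalue[OF that] pi_gt_zero by linarith
  show "mat_exp log_mat = V \<and> (\<forall>l. cplx_eigenvalue log_mat l \<longrightarrow> - pi < Im l \<and> Im l < pi)"
  proof (intro conjI allI impI)
    fix l assume "cplx_eigenvalue log_mat l"
    then have "\<bar>Im l\<bar> < pi" by (rule strip)
    then show "- pi < Im l" "Im l < pi" by linarith+
  qed (rule mat_exp_log_mat)
  fix X assume X: "mat_exp X = V \<and> (\<forall>l. cplx_eigenvalue X l \<longrightarrow> - pi < Im l \<and> Im l < pi)"
  have "X ** V = V ** X" using mat_exp_commute[of X X] X by simp
  then show "X = log_mat"
  proof (rule mat_exp_inj_on_strip[OF log_mat_commute[symmetric]])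
    show "mat_exp X = mat_exp log_mat" using X by (simp add: mat_exp_log_mat)
    show "\<bar>Im l\<bar> < pi" if "cplx_eigenvalue X l" for l
    proof -
      have "- pi < Im l \<and> Im l < pi" using X that by blast
      then show ?thesis by linarith
    qed
  qed (rule strip)
qed

end

lemma spec_norm_principal_log_le:
  assumes "orthogonal_matrix V" "spec_norm (V - mat 1) < 1"
  shows "spec_norm (principal_log V) \<le> 2 * arcsin (spec_norm (V - mat 1) / 2)"
proof -
  obtain B where "orthonormal_basis B" "\<forall>b\<in>B. \<exists>\<mu>. cmat V *v b = \<mu> *s b"
    using orthogonal_matrix_eigenbasis[OF assms(1)] by blast
  then interpret orthogonal_eigenbasis V B using assms by unfold_locales
  show ?thesis using spec_norm_log_mat by (simp add: principal_log_eq_log_mat)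
qed

theorem propositionB2:
  fixes V :: "real^'n^'n" and r :: real
  assumes "orthogonal_matrix V"
    and "spec_norm (V - mat 1) < r"
    and "r < 1"
  shows "spec_norm (principal_log V) < r * sqrt (1 - r^2 / 4) / (1 - r^2 / 2)"
proof -
  have "spec_norm (principal_log V) \<le> 2 * arcsin (spec_norm (V - mat 1) / 2)"
    using spec_norm_principal_log_le assms by force
  also have "\<dots> < r * sqrt (1 - r^2 / 4) / (1 - r^2 / 2)"
    using double_arcsin_half_lt[OF spec_norm_nonneg assms(2,3)] .
  finally show ?thesis .
qed

end
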